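(* Let $\mathbb{F}$ be an infinite field, $n\ge1$, and for $i=1,\dots,n$ let $m_i\ge 2$ and $L_i\ge1$ be integers. Put $R_i=\frac{m_i^{L_i}-1}{m_i-1}$, $D_i=\prod_{k=1}^{i-1}R_k$ (so $D_1=1$), $K_0=\prod_{i=1}^nR_i$, $N=\prod_{i=1}^nL_i$, and $e_i(s)=\frac{m_i^{s-1}-1}{m_i-1}=1+m_i+\dots+m_i^{s-2}$ for $s=1,\dots,L_i$ (with $e_i(1)=0$). In the sliced-contraction setting described in the context, define for $x\in\mathbb{F}$ the encoded tensors $$\tilde A^{(i,j)}(x)=\sum_{s=1}^{L_i}A^{(i,j)}_{s}\,x^{D_i\,e_i(s)}\qquad (j=1,\dots,m_i),$$ and $g(x)=\Phi\big(\tilde A^{(1,1)}(x),\dots,\tilde A^{(1,m_1)}(x),\dots,\tilde A^{(n,1)}(x),\dots,\tilde A^{(n,m_n)}(x)\big)$. Then $g$ is a polynomial in $x$ with coefficients in $W$ of degree at most $K_0-1$, and for each $(s_1,\dots,s_n)$ the coefficient of $x^{\sum_i D_i m_i e_i(s_i)}$ in $g$ equals the sliced partition $\sigma_{s_1\cdots s_n}$ (these $N$ exponents are pairwise distinct, and no other product of slices contributes to them). Consequently, for every integer $f\ge0$, the scheme with $K=f+K_0$ workers, worker $k$ computing $g(x_k)$ for pairwise distinct $x_1,\dots,x_K\in\mathbb{F}$, allows the master to recover every $\sigma_{s_1\cdots s_n}$ and hence $\sigma_{\mathrm{final}}$ from the outputs of any $K_0$ workers. Hence the $f$-resilient number $f+\prod_{i=1}^n\frac{m_i^{L_i}-1}{m_i-1}$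 is achievable, with gain compared to naive replication $$\Delta=\Big(\prod_{i=1}^nL_i-1\Big)(f+1)-\prod_{i=1}^n\frac{m_i^{L_i}-1}{m_i-1}+1.$$
   Context: Setting (sliced parallel tensor network contraction). A tensor network is contracted in parallel by "slicing" $n$ of its closed indices: index $i$ has dimension $L_i$ and is shared by $m_i$ tensors (an "$m_i$-node index"), and the sliced indices are pairwise non-adjacent, i.e. no tensor carries two sliced indices. Fixing the value $s_i\in\{1,\dots,L_i\}$ of each sliced index turns each of the $m_i$ tensors attached to index $i$ into a sliced subtensor $A^{(i,j)}_{s_i}\in V_{i,j}$ ($j=1,\dots,m_i$), and contracting the rest of the network (all tensors not attached to sliced indices, together with all non-sliced indices) is a multilinear map $\Phi:\prod_{i=1}^n\prod_{j=1}^{m_i}V_{i,j}\to W$ between finite-dimensional vector spaces over an infinite field $\mathbb{F}$. The sliced partition for $(s_1,\dots,s_n)$ is $\sigma_{s_1\cdots s_n}=\Phi(A^{(1,1)}_{s_1},\dots,A^{(1,m_1)}_{s_1},\dots,A^{(n,1)}_{s_n},\dots,A^{(n,m_n)}_{s_n})$, and the desired output is $\sigma_{\mathrm{final}}=\sum_{s_1,\dots,s_n}\sigma_{s_1\cdots s_n}$; there are $N=\prod_i L_i$ sliced partitions. Computing model: a master distributes work to workers; each worker evaluates $\Phi$ once on one input from each $V_{i,j}$ (so it has the same computational cost as computing one sliced partition) and returns the result; up to $f$ workers may fail, and nothing is recovered from a failed worker. The $f$-resilient number of a scheme is the total number of workers required so that $\sigma_{\mathrm{final}}$ can be retrieved despite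 any $f$ worker failures. Naive replication (each of the $N$ sliced partitions computed by $f+1$ workers) has $f$-resilient number $N(f+1)$; the gain of a scheme is $N(f+1)$ minus its $f$-resilient number. *)

theory Defs
  imports "HOL-Analysis.Analysis"
begin

text \<open>Parameters of the coded sliced-contraction scheme.
  m i = number of tensors sharing sliced index i, L i = dimension of sliced index i.\<close>

definition Rc :: "nat \<Rightarrow> nat \<Rightarrow> nat" where
  "Rc mi Li = (mi ^ Li - 1) div (mi - 1)"

definition ec :: "nat \<Rightarrow> nat \<Rightarrow> nat" where
  "ec mi s = (mi ^ (s - 1) - 1) div (mi - 1)"

definition Dc :: "(nat \<Rightarrow> nat) \<Rightarrow> (nat \<Rightarrow> nat) \<Rightarrow> nat \<Rightarrow> nat" where
  "Dc m L i = (\<Prod>k\<in>{1..<i}. Rc (m k) (L k))"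

definition K0 :: "nat \<Rightarrow> (nat \<Rightarrow> nat) \<Rightarrow> (nat \<Rightarrow> nat) \<Rightarrow> nat" where
  "K0 n m L = (\<Prod>i\<in>{1..n}. Rc (m i) (L i))"

definition Nslices :: "nat \<Rightarrow> (nat \<Rightarrow> nat) \<Rightarrow> nat" where
  "Nslices n L = (\<Prod>i\<in>{1..n}. L i)"

definition positions :: "nat \<Rightarrow> (nat \<Rightarrow> nat) \<Rightarrow> (nat \<times> nat) set" where
  "positions n m = {(i, j). i \<in> {1..n} \<and> j \<in> {1..m i}}"

definition slice_tuples :: "nat \<Rightarrow> (nat \<Rightarrow> nat) \<Rightarrow> (nat \<Rightarrow> nat) set" where
  "slice_tuples n L = (\<Pi>\<^sub>E i\<in>{1..n}. {1..L i})"

definition multilinear_on ::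
  "'p set \<Rightarrow> (('p \<Rightarrow> 'a::field ^ 'd) \<Rightarrow> 'a ^ 'e) \<Rightarrow> bool" where
  "multilinear_on P Phi \<longleftrightarrow>
     (\<forall>a b. (\<forall>p\<in>P. a p = b p) \<longrightarrow> Phi a = Phi b) \<and>
     (\<forall>p\<in>P. \<forall>a u v. Phi (a(p := u + v)) = Phi (a(p := u)) + Phi (a(p := v))) \<and>
     (\<forall>p\<in>P. \<forall>a c u. Phi (a(p := c *s u)) = c *s Phi (a(p := u)))"

text \<open>Sliced partition sigma_{s_1...s_n}; A i j s is the slice A^{(i,j)}_s.\<close>
definition sigma ::
  "((nat \<times> nat \<Rightarrow> 'a::field ^ 'd) \<Rightarrow> 'a ^ 'e) \<Rightarrow> (nat \<Rightarrow> nat \<Rightarrow> nat \<Rightarrow> 'a ^ 'd)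
     \<Rightarrow> (nat \<Rightarrow> nat) \<Rightarrow> 'a ^ 'e" where
  "sigma Phi A s = Phi (\<lambda>(i, j). A i j (s i))"

definition sigma_final ::
  "nat \<Rightarrow> (nat \<Rightarrow> nat) \<Rightarrow> ((nat \<times> nat \<Rightarrow> 'a::field ^ 'd) \<Rightarrow> 'a ^ 'e)
     \<Rightarrow> (nat \<Rightarrow> nat \<Rightarrow> nat \<Rightarrow> 'a ^ 'd) \<Rightarrow> 'a ^ 'e" where
  "sigma_final n L Phi A = (\<Sum>s\<in>slice_tuples n L. sigma Phi A s)"

definition enc ::
  "(nat \<Rightarrow> nat) \<Rightarrow> (nat \<Rightarrow> nat) \<Rightarrow> (nat \<Rightarrow> nat \<Rightarrow> nat \<Rightarrow> 'a::field ^ 'd)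
     \<Rightarrow> nat \<Rightarrow> nat \<Rightarrow> 'a \<Rightarrow> 'a ^ 'd" where
  "enc m L A i j x = (\<Sum>s = 1..L i. x ^ (Dc m L i * ec (m i) s) *s A i j s)"

definition gfun ::
  "(nat \<Rightarrow> nat) \<Rightarrow> (nat \<Rightarrow> nat) \<Rightarrow> ((nat \<times> nat \<Rightarrow> 'a::field ^ 'd) \<Rightarrow> 'a ^ 'e)
     \<Rightarrow> (nat \<Rightarrow> nat \<Rightarrow> nat \<Rightarrow> 'a ^ 'd) \<Rightarrow> 'a \<Rightarrow> 'a ^ 'e" where
  "gfun m L Phi A x = Phi (\<lambda>(i, j). enc m L A i j x)"

definition expo :: "nat \<Rightarrow> (nat \<Rightarrow> nat) \<Rightarrow> (nat \<Rightarrow> nat) \<Rightarrow> (nat \<Rightarrow> nat) \<Rightarrow> nat" where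
  "expo n m L s = (\<Sum>i = 1..n. Dc m L i * m i * ec (m i) (s i))"

end

theory Submission
  imports Defs "HOL-Computational_Algebra.Polynomial"
begin

text \<open>Expanding g multilinearly gives one term per choice sigma of a slice for every encoded
  tensor, carrying the power sum_i D_i (sum_j e_i(sigma(i,j))). Each inner sum is below
  m_i e_i(L_i) + 1 = R_i, so the exponent is a mixed-radix numeral with digits in [0, R_i):
  it is below K0 and determines its digits. The digit m_i e_i(s_i) of the exponent of
  sigma_{s_1...s_n} is produced only by choosing s_i for all m_i tensors, because the e_i(s)
  are repunits in base m_i, and m_i such repunits add up to m_i times a repunit only when
  they are all equal. Hence g is a polynomial of degree below K0 whose coefficients at these
  exponents are the sliced partitions, and any K0 distinct evaluations determine it.\<close>

section \<open>Multilinear expansion\<close>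

lemma multilinear_on_cong:
  assumes "multilinear_on P Phi" and "\<And>p. p \<in> P \<Longrightarrow> a p = b p"
  shows "Phi a = Phi b"
  using assms unfolding multilinear_on_def by blast

lemma multilinear_on_add:
  assumes "multilinear_on P Phi" and "q \<in> P"
  shows "Phi (a(q := u + v)) = Phi (a(q := u)) + Phi (a(q := v))"
  using assms unfolding multilinear_on_def by blast

lemma multilinear_on_scale:
  assumes "multilinear_on P Phi" and "q \<in> P"
  shows "Phi (a(q := c *s u)) = c *s Phi (a(q := u))"
  using assms unfolding multilinear_on_def by blast

lemma multilinear_on_sum:
  assumes ml: "multilinear_on P Phi" and q: "q \<in> P" and "finite S"
  shows "Phi (a(q := \<Sum>s\<in>S. v s)) = (\<Sum>s\<in>S. Phi (a(q := v s)))"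
  using \<open>finite S\<close>
proof (induction S rule: finite_induct)
  case empty
  have "Phi (a(q := 0)) = Phi (a(q := 0 *s 0))" by simp
  also have "\<dots> = 0 *s Phi (a(q := 0))" by (rule multilinear_on_scale[OF ml q])
  finally show ?case by (simp only: sum.empty vec.scale_zero_left)
next
  case (insert s S)
  have "Phi (a(q := \<Sum>x\<in>insert s S. v x)) = Phi (a(q := v s + sum v S))"
    by (simp only: sum.insert[OF insert.hyps])
  also have "\<dots> = Phi (a(q := v s)) + Phi (a(q := sum v S))"
    by (rule multilinear_on_add[OF ml q])
  finally show ?case by (simp only: insert.IH sum.insert[OF insert.hyps])
qed

lemma multilinear_on_expand_override:
  assumes ml: "multilinear_on P Phi" and "finite Q" and "Q \<subseteq> P"
    and "\<And>p. p \<in> Q \<Longrightarrow> finite (S p)"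
  shows "Phi (override_on a (\<lambda>p. \<Sum>s\<in>S p. c p s *s u p s) Q) =
    (\<Sum>\<sigma>\<in>PiE Q S. (\<Prod>p\<in>Q. c p (\<sigma> p)) *s Phi (override_on a (\<lambda>p. u p (\<sigma> p)) Q))"
  using assms(2-)
proof (induction Q arbitrary: a rule: finite_induct)
  case empty
  then show ?case by simp
next
  case (insert q Q)
  have q: "q \<in> P" and fin: "finite (S q)" using insert.prems by auto
  let ?V = "\<lambda>p. \<Sum>s\<in>S p. c p s *s u p s"
  let ?term = "\<lambda>a \<sigma>. (\<Prod>p\<in>Q. c p (\<sigma> p)) *s Phi (override_on a (\<lambda>p. u p (\<sigma> p)) Q)"
  have "Phi (override_on a ?V (insert q Q)) = Phi ((override_on a ?V Q)(q := ?V q))"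
    by (simp add: override_on_insert)
  also have "\<dots> = (\<Sum>s\<in>S q. c q s *s Phi ((override_on a ?V Q)(q := u q s)))"
    by (simp add: multilinear_on_sum[OF ml q fin] multilinear_on_scale[OF ml q])
  also have "\<dots> = (\<Sum>s\<in>S q. c q s *s Phi (override_on (a(q := u q s)) ?V Q))"
  proof -
    have "(override_on a ?V Q)(q := w) = override_on (a(q := w)) ?V Q" for w
      using insert.hyps by (auto simp: override_on_def)
    then show ?thesis by simp
  qed
  also have "\<dots> = (\<Sum>s\<in>S q. \<Sum>\<sigma>\<in>PiE Q S. c q s *s ?term (a(q := u q s)) \<sigma>)"
    using insert by (simp add: vec.scale_sum_right)
  also have "\<dots> = (\<Sum>(s, \<sigma>)\<in>S q \<times> PiE Q S. c q s *s ?term (a(q := u q s)) \<sigma>)"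
    by (rule sum.cartesian_product)
  also have "\<dots> = (\<Sum>\<tau>\<in>PiE (insert q Q) S.
      (\<Prod>p\<in>insert q Q. c p (\<tau> p)) *s Phi (override_on a (\<lambda>p. u p (\<tau> p)) (insert q Q)))"
    using insert.hyps
    by (intro sum.reindex_bij_witness[of _ "\<lambda>\<tau>. (\<tau> q, \<tau>(q := undefined))" "\<lambda>(s, \<sigma>). \<sigma>(q := s)"])
      (auto simp: PiE_def extensional_def override_on_def fun_upd_def
        intro!: arg_cong2[where f="(*s)"] arg_cong[where f=Phi] prod.cong)
  finally show ?case .
qed

lemma multilinear_on_expand:
  assumes ml: "multilinear_on P Phi" and "finite P" and "\<And>p. p \<in> P \<Longrightarrow> finite (S p)"
  shows "Phi (\<lambda>p. \<Sum>s\<in>S p. c p s *s u p s) =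
    (\<Sum>\<sigma>\<in>PiE P S. (\<Prod>p\<in>P. c p (\<sigma> p)) *s Phi (\<lambda>p. u p (\<sigma> p)))"
proof -
  have "Phi (\<lambda>p. \<Sum>s\<in>S p. c p s *s u p s) =
      Phi (override_on undefined (\<lambda>p. \<Sum>s\<in>S p. c p s *s u p s) P)"
    by (rule multilinear_on_cong[OF ml]) simp
  also have "\<dots> = (\<Sum>\<sigma>\<in>PiE P S. (\<Prod>p\<in>P. c p (\<sigma> p)) *s
      Phi (override_on undefined (\<lambda>p. u p (\<sigma> p)) P))"
    using assms by (intro multilinear_on_expand_override) auto
  also have "\<dots> = (\<Sum>\<sigma>\<in>PiE P S. (\<Prod>p\<in>P. c p (\<sigma> p)) *s Phi (\<lambda>p. u p (\<sigma> p)))"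
    by (intro sum.cong arg_cong[where f="(*s) _"] multilinear_on_cong[OF ml]) simp_all
  finally show ?thesis .
qed

section \<open>Repunits\<close>

definition repunit :: "nat \<Rightarrow> nat \<Rightarrow> nat" where
  "repunit b k = (\<Sum>i<k. b ^ i)"

lemma repunit_Suc: "repunit b (Suc k) = b * repunit b k + 1"
  unfolding repunit_def sum.lessThan_Suc_shift by (simp add: sum_distrib_left)

lemma strict_mono_repunit: "b \<ge> 1 \<Longrightarrow> strict_mono (repunit b)"
  by (rule strict_monoI_Suc) (simp add: repunit_def)

lemma repunit_eq_div:
  assumes "b \<ge> 2"
  shows "repunit b k = (b ^ k - 1) div (b - 1)"
proof -
  obtain c where b: "b = Suc c" using assms by (cases b) auto
  have "c * repunit b k + 1 = b ^ k"
  proof (induction k)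
    case 0
    then show ?case by (simp add: repunit_def)
  next
    case (Suc k)
    have "c * repunit b (Suc k) + 1 = b * (c * repunit b k + 1)"
      by (simp add: repunit_Suc b algebra_simps)
    with Suc show ?case by simp
  qed
  then have "b ^ k - 1 = c * repunit b k" by linarith
  then show ?thesis using assms by (simp add: b)
qed

lemma Rc_eq_repunit: "m \<ge> 2 \<Longrightarrow> Rc m L = repunit m L"
  by (simp add: Rc_def repunit_eq_div)

lemma ec_eq_repunit: "m \<ge> 2 \<Longrightarrow> ec m s = repunit m (s - 1)"
  by (simp add: ec_def repunit_eq_div)

lemma sum_repunit_eq_card_mult_imp_eq:
  assumes "finite J" and "card J = b" and sum: "(\<Sum>j\<in>J. repunit b (h j)) = b * repunit b h0"
    and "j \<in> J"
  shows "h j = h0"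
proof -
  have "card J > 0" using assms(1,4) card_gt_0_iff by blast
  then have "b \<ge> 1" using \<open>card J = b\<close> by simp
  then have mono: "strict_mono (repunit b)" by (rule strict_mono_repunit)
  have le: "h j' \<le> h0" if "j' \<in> J" for j'
  proof (rule ccontr)
    assume "\<not> h j' \<le> h0"
    then have "repunit b (Suc h0) \<le> repunit b (h j')"
      using mono by (simp add: strict_mono_less_eq)
    also have "\<dots> \<le> (\<Sum>j\<in>J. repunit b (h j))"
      using that \<open>finite J\<close> by (intro member_le_sum) auto
    finally show False using sum by (simp add: repunit_Suc)
  qed
  show ?thesis
  proof (rule ccontr)
    assume "h j \<noteq> h0"
    with le[OF \<open>j \<in> J\<close>] have "repunit b (h j) < repunit b h0"
      using mono by (simp add: strict_mono_less)
    then have "(\<Sum>j\<in>J. repunit b (h j)) < (\<Sum>j\<in>J. repunit b h0)"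
      using le mono \<open>j \<in> J\<close>
      by (intro sum_strict_mono_ex1[OF \<open>finite J\<close>]) (auto simp: strict_mono_less_eq)
    then show False using sum \<open>card J = b\<close> by simp
  qed
qed

section \<open>Mixed-radix numerals\<close>

lemma mixed_radix_less:
  fixes n :: nat and R t :: "nat \<Rightarrow> nat"
  assumes "\<forall>i\<in>{1..n}. t i < R i"
  shows "(\<Sum>i=1..n. (\<Prod>k\<in>{1..<i}. R k) * t i) < (\<Prod>i\<in>{1..n}. R i)"
  using assms
proof (induction n)
  case 0
  then show ?case by simp
next
  case (Suc n)
  define P where "P = (\<Prod>i\<in>{1..n}. R i)"
  have "t (Suc n) + 1 \<le> R (Suc n)" using bspec[OF Suc.prems, of "Suc n"] by simp
  have "(\<Sum>i=1..Suc n. (\<Prod>k\<in>{1..<i}. R k) * t i) = (\<Sum>i=1..n. (\<Prod>k\<in>{1..<i}. R k) * t i) + P * t (Suc n)"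
    by (simp add: P_def atLeastLessThanSuc_atLeastAtMost)
  also have "\<dots> < P + P * t (Suc n)" using Suc by (simp add: P_def)
  also have "\<dots> \<le> P * R (Suc n)"
    using mult_le_mono2[OF \<open>t (Suc n) + 1 \<le> R (Suc n)\<close>, of P] by simp
  also have "\<dots> = (\<Prod>i\<in>{1..Suc n}. R i)" by (simp add: P_def)
  finally show ?case .
qed

lemma mixed_radix_digits_unique:
  fixes n :: nat and R t t' :: "nat \<Rightarrow> nat"
  assumes "\<forall>i\<in>{1..n}. t i < R i" and "\<forall>i\<in>{1..n}. t' i < R i"
    and "(\<Sum>i=1..n. (\<Prod>k\<in>{1..<i}. R k) * t i) = (\<Sum>i=1..n. (\<Prod>k\<in>{1..<i}. R k) * t' i)"
    and "i \<in> {1..n}"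
  shows "t i = t' i"
  using assms
proof (induction n)
  case 0
  then show ?case by simp
next
  case (Suc n)
  define P where "P = (\<Prod>i\<in>{1..n}. R i)"
  define low where "low t = (\<Sum>i=1..n. (\<Prod>k\<in>{1..<i}. R k) * t i)" for t :: "nat \<Rightarrow> nat"
  have lt: "\<forall>i\<in>{1..n}. t i < R i" "\<forall>i\<in>{1..n}. t' i < R i" using Suc.prems(1,2) by auto
  have low: "low t < P" "low t' < P"
    unfolding low_def P_def by (fact mixed_radix_less[OF lt(1)], fact mixed_radix_less[OF lt(2)])
  have eq: "low t + P * t (Suc n) = low t' + P * t' (Suc n)"
    using Suc.prems(3) by (simp add: low_def P_def atLeastLessThanSuc_atLeastAtMost)
  have low_eq: "low t = low t'" using low eq by (metis mod_mult_self2 mod_less)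
  have "P > 0" using low by simp
  then have "t (Suc n) = t' (Suc n)" using eq low_eq by simp
  then show ?case
    using Suc.IH[OF lt] low_eq Suc.prems(4) by (auto simp: low_def le_Suc_eq)
qed

section \<open>Interpolation of vector-valued polynomials\<close>

lemma vec_poly_coeffs_unique:
  fixes d d' :: "nat \<Rightarrow> 'a::field ^ 'e" and xs :: "nat \<Rightarrow> 'a"
  assumes "inj_on xs T" and "finite T" and "card T = K"
    and eq: "\<forall>k\<in>T. (\<Sum>j<K. xs k ^ j *s d j) = (\<Sum>j<K. xs k ^ j *s d' j)"
    and "j < K"
  shows "d j = d' j"
proof (rule vec_eq_iff[THEN iffD2], rule allI)
  fix e
  define p where "p = (\<Sum>i<K. monom ((d i - d' i) $ e) i)"
  have "poly p (xs k) = 0" if "k \<in> T" for k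
  proof -
    have "(\<Sum>i<K. xs k ^ i * d i $ e) = (\<Sum>i<K. xs k ^ i * d' i $ e)"
      using arg_cong[OF bspec[OF eq that], of "\<lambda>v. v $ e"] by simp
    then show ?thesis
      by (simp add: p_def poly_sum poly_monom sum_subtractf algebra_simps)
  qed
  have "p = 0"
  proof (rule ccontr)
    assume "p \<noteq> 0"
    have "K = card (xs ` T)" using assms by (simp add: card_image)
    also have "\<dots> \<le> card {x. poly p x = 0}"
      using \<open>p \<noteq> 0\<close> \<open>\<And>k. k \<in> T \<Longrightarrow> poly p (xs k) = 0\<close>
      by (intro card_mono poly_roots_finite) auto
    also have "\<dots> \<le> degree p" by (rule card_poly_roots_bound[OF \<open>p \<noteq> 0\<close>])
    also have "\<dots> \<le> K - 1" unfolding p_def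
      by (intro degree_sum_le) (auto intro: order.trans[OF degree_monom_le])
    finally show False using \<open>j < K\<close> by simp
  qed
  then have "coeff p j = 0" by simp
  then show "d j $ e = d' j $ e"
    using \<open>j < K\<close> by (simp add: p_def coeff_sum)
qed

lemma vec_poly_coeffs_decodable:
  fixes xs :: "nat \<Rightarrow> 'a::field"
  assumes "inj_on xs T" and "finite T" and "card T = K"
  shows "\<exists>dec. \<forall>(c :: nat \<Rightarrow> 'a ^ 'e) y.
    (\<forall>k\<in>T. y k = (\<Sum>j<K. xs k ^ j *s c j)) \<longrightarrow> (\<forall>j<K. dec y j = c j)"
proof (intro exI allI impI)
  fix c y :: "nat \<Rightarrow> 'a ^ 'e" and j
  let ?fits = "\<lambda>c. \<forall>k\<in>T. y k = (\<Sum>j<K. xs k ^ j *s c j)"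
  assume "?fits c" and "j < K"
  have "?fits (SOME c. ?fits c)" using \<open>?fits c\<close> by (rule someI[of ?fits])
  with \<open>?fits c\<close> show "(SOME c. ?fits c) j = c j"
    using assms \<open>j < K\<close> by (intro vec_poly_coeffs_unique[of xs T K]) auto
qed

section \<open>The exponents of the encoding\<close>

lemma Rc_eq_Suc_mult_ec: "m \<ge> 2 \<Longrightarrow> L \<ge> 1 \<Longrightarrow> Rc m L = m * ec m L + 1"
  using repunit_Suc[of m "L - 1"] by (simp add: Rc_eq_repunit ec_eq_repunit)

lemma ec_mono: "m \<ge> 2 \<Longrightarrow> s \<le> t \<Longrightarrow> ec m s \<le> ec m t"
  using strict_mono_repunit[of m] by (simp add: ec_eq_repunit strict_mono_less_eq)

lemma sum_ec_less_Rc: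
  assumes "m \<ge> 2" and "L \<ge> 1" and "\<forall>j\<in>{1..m}. h j \<le> L"
  shows "(\<Sum>j=1..m. ec m (h j)) < Rc m L"
proof -
  have "(\<Sum>j=1..m. ec m (h j)) \<le> (\<Sum>j=1..m. ec m L)"
    using assms by (intro sum_mono ec_mono) auto
  then show ?thesis using assms by (simp add: Rc_eq_Suc_mult_ec)
qed

lemma sum_ec_eq_mult_imp_eq:
  assumes "m \<ge> 2" and "\<forall>j\<in>{1..m}. h j \<ge> 1" and "s \<ge> 1"
    and sum: "(\<Sum>j=1..m. ec m (h j)) = m * ec m s" and "j \<in> {1..m}"
  shows "h j = s"
proof -
  have "(\<Sum>j=1..m. repunit m (h j - 1)) = m * repunit m (s - 1)"
    using sum \<open>m \<ge> 2\<close> by (simp add: ec_eq_repunit)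
  then have "h j - 1 = s - 1"
    using \<open>j \<in> {1..m}\<close>
    by (intro sum_repunit_eq_card_mult_imp_eq[where J="{1..m}" and h="\<lambda>j. h j - 1"]) simp_all
  moreover have "h j \<ge> 1" using assms(2,5) by blast
  ultimately show ?thesis using \<open>s \<ge> 1\<close> by simp
qed

text \<open>A slice assignment \<open>\<sigma>\<close> picks the slice \<open>\<sigma> (i, j)\<close> of the tensor at position \<open>(i, j)\<close>;
  these index the terms of the multilinear expansion of g.\<close>

definition slice_assignments :: "nat \<Rightarrow> (nat \<Rightarrow> nat) \<Rightarrow> (nat \<Rightarrow> nat) \<Rightarrow> (nat \<times> nat \<Rightarrow> nat) set"
  where "slice_assignments n m L = PiE (positions n m) (\<lambda>(i, j). {1..L i})"

definition assignment_expo :: "nat \<Rightarrow> (nat \<Rightarrow> nat) \<Rightarrow> (nat \<Rightarrow> nat) \<Rightarrow> (nat \<times> nat \<Rightarrow> nat) \<Rightarrow> nat"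
  where "assignment_expo n m L \<sigma> = (\<Sum>i=1..n. Dc m L i * (\<Sum>j=1..m i. ec (m i) (\<sigma> (i, j))))"

definition uniform_assignment :: "nat \<Rightarrow> (nat \<Rightarrow> nat) \<Rightarrow> (nat \<Rightarrow> nat) \<Rightarrow> nat \<times> nat \<Rightarrow> nat"
  where "uniform_assignment n m s = restrict (\<lambda>(i, j). s i) (positions n m)"

lemma positions_eq_Sigma: "positions n m = Sigma {1..n} (\<lambda>i. {1..m i})"
  by (auto simp: positions_def)

lemma sum_positions: "(\<Sum>p\<in>positions n m. f p) = (\<Sum>i=1..n. \<Sum>j=1..m i. f (i, j))"
  unfolding positions_eq_Sigma by (subst sum.Sigma) auto

lemma finite_slice_assignments: "finite (slice_assignments n m L)"
  unfolding slice_assignments_def positions_eq_Sigma by (intro finite_PiE) auto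

lemma uniform_assignment_in_slice_assignments:
  "s \<in> slice_tuples n L \<Longrightarrow> uniform_assignment n m s \<in> slice_assignments n m L"
  by (auto simp: uniform_assignment_def slice_assignments_def slice_tuples_def positions_def)

lemma assignment_expo_uniform_assignment:
  "assignment_expo n m L (uniform_assignment n m s) = expo n m L s"
  unfolding assignment_expo_def expo_def uniform_assignment_def positions_def
  by (intro sum.cong) (simp_all add: mult.assoc)

lemma slice_assignments_range:
  assumes "\<sigma> \<in> slice_assignments n m L" and "i \<in> {1..n}" and "j \<in> {1..m i}"
  shows "\<sigma> (i, j) \<in> {1..L i}"
proof -
  have "(i, j) \<in> positions n m" using assms(2,3) by (simp add: positions_def)
  then show ?thesis using PiE_mem[OF assms(1)[unfolded slice_assignments_def]] by fastforce
qed

lemma sum_ec_slice_assignment_less_Rc: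
  assumes "\<forall>i\<in>{1..n}. m i \<ge> 2" and "\<forall>i\<in>{1..n}. L i \<ge> 1"
    and \<sigma>: "\<sigma> \<in> slice_assignments n m L" and i: "i \<in> {1..n}"
  shows "(\<Sum>j=1..m i. ec (m i) (\<sigma> (i, j))) < Rc (m i) (L i)"
proof -
  have "\<forall>j\<in>{1..m i}. \<sigma> (i, j) \<le> L i"
    using slice_assignments_range[OF \<sigma> i] by fastforce
  then show ?thesis using assms(1,2) i by (intro sum_ec_less_Rc) auto
qed

lemma assignment_expo_less_K0:
  assumes "\<forall>i\<in>{1..n}. m i \<ge> 2" and "\<forall>i\<in>{1..n}. L i \<ge> 1"
    and "\<sigma> \<in> slice_assignments n m L"
  shows "assignment_expo n m L \<sigma> < K0 n m L"
  unfolding assignment_expo_def K0_def Dc_def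
  using sum_ec_slice_assignment_less_Rc[OF assms] by (intro mixed_radix_less) blast

lemma assignment_expo_eq_expo_imp:
  assumes m_ge: "\<forall>i\<in>{1..n}. m i \<ge> 2" and L_ge: "\<forall>i\<in>{1..n}. L i \<ge> 1"
    and \<sigma>: "\<sigma> \<in> slice_assignments n m L" and s: "s \<in> slice_tuples n L"
    and eq: "assignment_expo n m L \<sigma> = expo n m L s"
  shows "\<sigma> = uniform_assignment n m s"
proof (rule PiE_ext[OF \<sigma>[unfolded slice_assignments_def]])
  let ?u = "uniform_assignment n m s" and ?R = "\<lambda>i. Rc (m i) (L i)"
  let ?block = "\<lambda>\<tau> i. \<Sum>j=1..m i. ec (m i) (\<tau> (i, j))"
  have u: "?u \<in> slice_assignments n m L"
    using s by (rule uniform_assignment_in_slice_assignments)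
  have digit_less: "\<forall>i\<in>{1..n}. ?block \<tau> i < ?R i" if "\<tau> \<in> slice_assignments n m L" for \<tau>
    using sum_ec_slice_assignment_less_Rc[OF m_ge L_ge that] by blast
  have "(\<Sum>i=1..n. (\<Prod>k\<in>{1..<i}. ?R k) * ?block \<sigma> i) = (\<Sum>i=1..n. (\<Prod>k\<in>{1..<i}. ?R k) * ?block ?u i)"
    using eq unfolding assignment_expo_def Dc_def assignment_expo_uniform_assignment[symmetric] .
  then have block_eq: "?block \<sigma> i = ?block ?u i" if "i \<in> {1..n}" for i
    by (rule mixed_radix_digits_unique[OF digit_less[OF \<sigma>] digit_less[OF u] _ that])
  fix p assume "p \<in> positions n m"
  then obtain i j where p: "p = (i, j)" and i: "i \<in> {1..n}" and j: "j \<in> {1..m i}"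
    by (auto simp: positions_def)
  have "?block \<sigma> i = m i * ec (m i) (s i)"
    using block_eq[OF i] i by (simp add: uniform_assignment_def positions_def)
  moreover have "\<forall>j\<in>{1..m i}. \<sigma> (i, j) \<ge> 1"
    using slice_assignments_range[OF \<sigma> i] by fastforce
  moreover have "s i \<ge> 1" using PiE_mem[OF s[unfolded slice_tuples_def] i] by simp
  moreover have "m i \<ge> 2" using m_ge i by blast
  ultimately have "\<sigma> (i, j) = s i"
    using j by (intro sum_ec_eq_mult_imp_eq[where h="\<lambda>j. \<sigma> (i, j)"])
  then show "\<sigma> p = ?u p"
    using \<open>p \<in> positions n m\<close> by (simp add: p uniform_assignment_def)
qed (rule uniform_assignment_in_slice_assignments[OF s, unfolded slice_assignments_def])

lemma expo_less_K0:
  assumes "\<forall>i\<in>{1..n}. m i \<ge> 2" and "\<forall>i\<in>{1..n}. L i \<ge> 1" and "s \<in> slice_tuples n L"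
  shows "expo n m L s < K0 n m L"
  using assignment_expo_less_K0[OF assms(1,2) uniform_assignment_in_slice_assignments[OF assms(3)]]
  by (simp add: assignment_expo_uniform_assignment)

lemma inj_on_expo:
  assumes m_ge: "\<forall>i\<in>{1..n}. m i \<ge> 2" and "\<forall>i\<in>{1..n}. L i \<ge> 1"
  shows "inj_on (expo n m L) (slice_tuples n L)"
proof (rule inj_onI)
  fix s s' assume s: "s \<in> slice_tuples n L" and s': "s' \<in> slice_tuples n L"
    and eq: "expo n m L s = expo n m L s'"
  have same: "uniform_assignment n m s' = uniform_assignment n m s"
    using assms s uniform_assignment_in_slice_assignments[OF s'] eq[symmetric]
    by (intro assignment_expo_eq_expo_imp) (simp_all add: assignment_expo_uniform_assignment)
  have "s' i = s i" if "i \<in> {1..n}" for i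
  proof -
    have "m i \<ge> 1" using m_ge that by fastforce
    then have "(i, 1) \<in> positions n m" using that by (simp add: positions_def)
    then show ?thesis using fun_cong[OF same, of "(i, 1)"] by (simp add: uniform_assignment_def)
  qed
  then show "s = s'"
    by (intro PiE_ext[OF s[unfolded slice_tuples_def] s'[unfolded slice_tuples_def]]) simp
qed

section \<open>Coefficients of g and decoding\<close>

lemma gfun_eq_sum_slice_assignments:
  assumes ml: "multilinear_on (positions n m) Phi"
  shows "gfun m L Phi A x = (\<Sum>\<sigma>\<in>slice_assignments n m L.
    x ^ assignment_expo n m L \<sigma> *s Phi (\<lambda>(i, j). A i j (\<sigma> (i, j))))"
proof -
  let ?P = "positions n m"
  have "gfun m L Phi A x = Phi (\<lambda>p. \<Sum>s\<in>{1..L (fst p)}.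
      x ^ (Dc m L (fst p) * ec (m (fst p)) s) *s A (fst p) (snd p) s)"
    by (simp add: gfun_def enc_def case_prod_beta')
  also have "\<dots> = (\<Sum>\<sigma>\<in>PiE ?P (\<lambda>p. {1..L (fst p)}).
      (\<Prod>p\<in>?P. x ^ (Dc m L (fst p) * ec (m (fst p)) (\<sigma> p))) *s Phi (\<lambda>p. A (fst p) (snd p) (\<sigma> p)))"
    using ml by (intro multilinear_on_expand) (auto simp: positions_eq_Sigma)
  also have "\<dots> = (\<Sum>\<sigma>\<in>slice_assignments n m L.
      x ^ assignment_expo n m L \<sigma> *s Phi (\<lambda>(i, j). A i j (\<sigma> (i, j))))"
  proof -
    have "(\<Sum>p\<in>?P. Dc m L (fst p) * ec (m (fst p)) (\<sigma> p)) = assignment_expo n m L \<sigma>" for \<sigma>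
      by (simp add: sum_positions assignment_expo_def sum_distrib_left)
    then have "(\<Prod>p\<in>?P. x ^ (Dc m L (fst p) * ec (m (fst p)) (\<sigma> p))) = x ^ assignment_expo n m L \<sigma>"
      for \<sigma> by (metis power_sum)
    then show ?thesis by (simp add: slice_assignments_def case_prod_beta')
  qed
  finally show ?thesis .
qed

lemma gfun_coeff_expo:
  assumes m_ge: "\<forall>i\<in>{1..n}. m i \<ge> 2" and L_ge: "\<forall>i\<in>{1..n}. L i \<ge> 1"
    and ml: "multilinear_on (positions n m) Phi"
  shows "\<exists>c. (\<forall>x. gfun m L Phi A x = (\<Sum>k<K0 n m L. x ^ k *s c k)) \<and>
    (\<forall>s\<in>slice_tuples n L. c (expo n m L s) = sigma Phi A s)"
proof -
  let ?S = "slice_assignments n m L" and ?e = "assignment_expo n m L"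
  define product where "product \<sigma> = Phi (\<lambda>(i, j). A i j (\<sigma> (i, j)))" for \<sigma>
  define c where "c k = (\<Sum>\<sigma>\<in>{\<sigma>\<in>?S. ?e \<sigma> = k}. product \<sigma>)" for k
  have "gfun m L Phi A x = (\<Sum>k<K0 n m L. x ^ k *s c k)" for x
  proof -
    have "?e ` ?S \<subseteq> {..<K0 n m L}"
      using assignment_expo_less_K0[OF m_ge L_ge] by auto
    then have "gfun m L Phi A x =
        (\<Sum>k<K0 n m L. \<Sum>\<sigma>\<in>{\<sigma>\<in>?S. ?e \<sigma> = k}. x ^ ?e \<sigma> *s product \<sigma>)"
      unfolding gfun_eq_sum_slice_assignments[OF ml] product_def
      by (intro sum.group[symmetric] finite_slice_assignments) auto
    also have "\<dots> = (\<Sum>k<K0 n m L. x ^ k *s c k)"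
      by (auto simp: c_def vec.scale_sum_right intro!: sum.cong)
    finally show ?thesis .
  qed
  moreover have "c (expo n m L s) = sigma Phi A s" if s: "s \<in> slice_tuples n L" for s
  proof -
    let ?u = "uniform_assignment n m s"
    have "{\<sigma>\<in>?S. ?e \<sigma> = expo n m L s} = {?u}"
      using assignment_expo_eq_expo_imp[OF m_ge L_ge _ s] uniform_assignment_in_slice_assignments[OF s]
      by (auto simp: assignment_expo_uniform_assignment)
    then have "c (expo n m L s) = product ?u" by (simp add: c_def)
    also have "\<dots> = sigma Phi A s"
      unfolding product_def sigma_def
      by (rule multilinear_on_cong[OF ml]) (auto simp: uniform_assignment_def)
    finally show ?thesis .
  qed
  ultimately show ?thesis by blast
qed

lemma sliced_partitions_decodable:
  fixes xs :: "nat \<Rightarrow> 'a::field"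
  assumes m_ge: "\<forall>i\<in>{1..n}. m i \<ge> 2" and L_ge: "\<forall>i\<in>{1..n}. L i \<ge> 1"
    and "inj_on xs T" and "finite T" and "card T = K0 n m L"
  shows "\<exists>dec :: (nat \<Rightarrow> 'a ^ 'e) \<Rightarrow> (nat \<Rightarrow> nat) \<Rightarrow> 'a ^ 'e.
    \<forall>(Phi :: (nat \<times> nat \<Rightarrow> 'a ^ 'd) \<Rightarrow> 'a ^ 'e) A y.
      multilinear_on (positions n m) Phi \<longrightarrow> (\<forall>k\<in>T. y k = gfun m L Phi A (xs k)) \<longrightarrow>
      (\<forall>s\<in>slice_tuples n L. dec y s = sigma Phi A s) \<and>
      (\<Sum>s\<in>slice_tuples n L. dec y s) = sigma_final n L Phi A"
proof -
  obtain dec :: "(nat \<Rightarrow> 'a ^ 'e) \<Rightarrow> nat \<Rightarrow> 'a ^ 'e" where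
    dec: "\<And>c y j. \<forall>k\<in>T. y k = (\<Sum>j<K0 n m L. xs k ^ j *s c j) \<Longrightarrow> j < K0 n m L \<Longrightarrow> dec y j = c j"
    using vec_poly_coeffs_decodable[OF assms(3-5)] by blast
  show ?thesis
  proof (intro exI[of _ "\<lambda>y s. dec y (expo n m L s)"] allI impI)
    fix Phi :: "(nat \<times> nat \<Rightarrow> 'a ^ 'd) \<Rightarrow> 'a ^ 'e" and A y
    assume ml: "multilinear_on (positions n m) Phi"
      and y: "\<forall>k\<in>T. y k = gfun m L Phi A (xs k)"
    obtain c where c: "\<And>x. gfun m L Phi A x = (\<Sum>k<K0 n m L. x ^ k *s c k)"
      and coeff: "\<forall>s\<in>slice_tuples n L. c (expo n m L s) = sigma Phi A s"
      using gfun_coeff_expo[OF m_ge L_ge ml] by blast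
    have "dec y (expo n m L s) = c (expo n m L s)" if "s \<in> slice_tuples n L" for s
      using y expo_less_K0[OF m_ge L_ge that] by (intro dec) (simp add: c)
    then have "dec y (expo n m L s) = sigma Phi A s" if "s \<in> slice_tuples n L" for s
      using coeff that by simp
    then show "(\<forall>s\<in>slice_tuples n L. dec y (expo n m L s) = sigma Phi A s) \<and>
        (\<Sum>s\<in>slice_tuples n L. dec y (expo n m L s)) = sigma_final n L Phi A"
      by (simp add: sigma_final_def)
  qed
qed

theorem theorem2:
  fixes n :: nat and m L :: "nat \<Rightarrow> nat"
  assumes inf: "infinite (UNIV :: 'a::field set)"
    and n_pos: "n \<ge> 1"
    and m_ge: "\<forall>i\<in>{1..n}. m i \<ge> 2"
    and L_ge: "\<forall>i\<in>{1..n}. L i \<ge> 1"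
  shows
    "(\<forall>(Phi :: (nat \<times> nat \<Rightarrow> 'a ^ 'd) \<Rightarrow> 'a ^ 'e) (A :: nat \<Rightarrow> nat \<Rightarrow> nat \<Rightarrow> 'a ^ 'd).
        multilinear_on (positions n m) Phi \<longrightarrow>
        (\<exists>c :: nat \<Rightarrow> 'a ^ 'e.
           (\<forall>x. gfun m L Phi A x = (\<Sum>k<K0 n m L. x ^ k *s c k)) \<and>
           (\<forall>s\<in>slice_tuples n L. c (expo n m L s) = sigma Phi A s)))
     \<and> inj_on (expo n m L) (slice_tuples n L)
     \<and> (\<forall>s\<in>slice_tuples n L. expo n m L s < K0 n m L)
     \<and> (\<forall>(f::nat) (xs :: nat \<Rightarrow> 'a) T.
          inj_on xs {1..f + K0 n m L} \<longrightarrow> T \<subseteq> {1..f + K0 n m L} \<longrightarrow> card T = K0 n m L \<longrightarrow>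
          (\<exists>dec :: (nat \<Rightarrow> 'a ^ 'e) \<Rightarrow> (nat \<Rightarrow> nat) \<Rightarrow> 'a ^ 'e.
             \<forall>(Phi :: (nat \<times> nat \<Rightarrow> 'a ^ 'd) \<Rightarrow> 'a ^ 'e) (A :: nat \<Rightarrow> nat \<Rightarrow> nat \<Rightarrow> 'a ^ 'd)
               (y :: nat \<Rightarrow> 'a ^ 'e).
               multilinear_on (positions n m) Phi \<longrightarrow>
               (\<forall>k\<in>T. y k = gfun m L Phi A (xs k)) \<longrightarrow>
               (\<forall>s\<in>slice_tuples n L. dec y s = sigma Phi A s) \<and>
               (\<Sum>s\<in>slice_tuples n L. dec y s) = sigma_final n L Phi A))
     \<and> (\<forall>f::nat. int (Nslices n L * (f + 1)) - int (f + K0 n m L)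
          = (int (Nslices n L) - 1) * int (f + 1) - int (K0 n m L) + 1)"
  apply (intro conjI allI impI)
  subgoal by (rule gfun_coeff_expo[OF m_ge L_ge])
  subgoal by (rule inj_on_expo[OF m_ge L_ge])
  subgoal using expo_less_K0[OF m_ge L_ge] by blast
  subgoal for f xs T
    by (rule sliced_partitions_decodable[OF m_ge L_ge])
      (meson inj_on_subset finite_subset finite_atLeastAtMost)+
  subgoal by (simp add: algebra_simps)
  done

end
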